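(* Assume the Hashimoto matrix $B$ is irreducible, $\mathbf{p}\in(0,1]^E$, and $\rho:=\rho\big(B^T\mathrm{diag}(\mathbf{p})\big)>1$. Then there exists $\mathbf{Q}\in[0,1]^E\setminus\{\mathbf{1}\}$ with $\mathbf{Q}=\mathbf{F}(\mathbf{Q};\mathbf{p})$.
   Context: $\mathcal{G}=(V,E)$ is a finite directed graph, edges written $i\to j$, $M=|E|$; $\mathcal{N}^-(j)=\{k:\,k\to j\in E\}$. The Hashimoto matrix is $B_{i\to j,\,k\to l}=\delta_{jk}(1-\delta_{il})$; irreducibility means the directed graph on $E$ with an arc $e\to e'$ whenever $B_{e,e'}\neq0$ is strongly connected. $\rho$ denotes spectral radius. For $\mathbf{p}\in[0,1]^E$, $\mathbf{F}(\cdot;\mathbf{p}):[0,1]^E\to[0,1]^E$ is defined componentwise: for the edge $j\to i$, $$F_{j\to i}(\mathbf{y};\mathbf{p})=\prod_{k\in\mathcal{N}^-(j)\setminus\{i\}}\big(1-p_{k\to j}+p_{k\to j}\,y_{k\to j}\big)$$ (empty product $=1$); its Jacobian at $\mathbf{1}$ is $B^T\mathrm{diag}(\mathbf{p})$. $\mathbf{1}$ is the all-ones vector, always a fixed point of $\mathbf{F}$. *)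

theory Defs
  imports Main "Jordan_Normal_Form.Spectral_Radius"
begin

(* Directed graph: edges are pairs (i,j) meaning i -> j. Vectors indexed by E are
   functions on 'v \<times> 'v (values outside E are irrelevant). *)

definition in_nbrs :: "('v \<times> 'v) set \<Rightarrow> 'v \<Rightarrow> 'v set" where
  "in_nbrs E j = {k. (k, j) \<in> E}"

definition hashimoto :: "('v \<times> 'v) \<Rightarrow> ('v \<times> 'v) \<Rightarrow> real" where
  "hashimoto e f = (if snd e = fst f \<and> fst e \<noteq> snd f then 1 else 0)"

definition hashimoto_irreducible :: "('v \<times> 'v) set \<Rightarrow> bool" where
  "hashimoto_irreducible E \<longleftrightarrow>
     (\<forall>e\<in>E. \<forall>e'\<in>E. (e, e') \<in> {(a, b). a \<in> E \<and> b \<in> E \<and> hashimoto a b \<noteq> 0}\<^sup>*)"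

(* The matrix B^T diag(p), with rows/columns indexed by E via an enumeration es of E
   (es distinct, set es = E); as a complex matrix for the library spectral radius. *)
definition BT_diag_mat :: "('v \<times> 'v) list \<Rightarrow> ('v \<times> 'v \<Rightarrow> real) \<Rightarrow> complex mat" where
  "BT_diag_mat es p = mat (length es) (length es)
     (\<lambda>(a, b). complex_of_real (hashimoto (es ! b) (es ! a) * p (es ! b)))"

definition Fmap :: "('v \<times> 'v) set \<Rightarrow> ('v \<times> 'v \<Rightarrow> real) \<Rightarrow> ('v \<times> 'v \<Rightarrow> real) \<Rightarrow> ('v \<times> 'v \<Rightarrow> real)" where
  "Fmap E p y = (\<lambda>(j, i). \<Prod>k\<in>in_nbrs E j - {i}. (1 - p (k, j) + p (k, j) * y (k, j)))"

end

theory Submission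
  imports Defs
begin

(* An eigenvalue c of A = B^T diag(p) with |c| = r > 1 yields, through the moduli of an
   eigenvector, a nonnegative vector w \<noteq> 0 with r w \<le> A w. Since
   \<Prod>(1 - a_k) \<le> 1 / (1 + \<Sum>a_k) for a_k \<in> [0,1], the vector u = 1 - \<epsilon> w satisfies F(u) \<le> u for small
   \<epsilon> > 0. F is monotone on [0,1]^E, so its iterates starting at 0 increase to a fixed point
   lying below u, hence different from 1. *)

lemma prod_one_minus_mult_one_plus_sum_le_1:
  fixes a :: "'a \<Rightarrow> real"
  assumes "finite K" and "\<forall>k\<in>K. 0 \<le> a k \<and> a k \<le> 1"
  shows "(\<Prod>k\<in>K. 1 - a k) * (1 + (\<Sum>k\<in>K. a k)) \<le> 1"
  using assms
proof (induction K rule: finite_induct)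
  case empty
  then show ?case by simp
next
  case (insert x F)
  define P where "P = (\<Prod>k\<in>F. 1 - a k)"
  define s where "s = (\<Sum>k\<in>F. a k)"
  have IH: "P * (1 + s) \<le> 1" using insert unfolding P_def s_def by simp
  have P_le_1: "P \<le> 1" unfolding P_def by (rule prod_le_1) (use insert in auto)
  have ax: "0 \<le> a x" "a x \<le> 1" using insert by auto
  have "(1 - a x) * P * (1 + (a x + s)) = (1 - a x) * (P * (1 + s) + a x * P)"
    by (simp add: algebra_simps)
  also have "\<dots> \<le> (1 - a x) * (1 + a x * 1)"
    using IH P_le_1 ax by (intro mult_left_mono add_mono) auto
  also have "\<dots> \<le> 1" by (simp add: algebra_simps)
  finally show ?case using insert unfolding P_def s_def by simp
qed

lemma Fmap_apply:
  "Fmap E p y (j, i) = (\<Prod>k\<in>in_nbrs E j - {i}. 1 - p (k, j) + p (k, j) * y (k, j))"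
  by (simp add: Fmap_def)

lemma in_nbrsD: "k \<in> in_nbrs E j \<Longrightarrow> (k, j) \<in> E"
  by (simp add: in_nbrs_def)

lemma finite_in_nbrs: "finite E \<Longrightarrow> finite (in_nbrs E j)"
  unfolding in_nbrs_def by (rule finite_subset[of _ "fst ` E"]) force+

lemma Fmap_mono:
  assumes "\<forall>f\<in>E. 0 \<le> p f \<and> p f \<le> 1" and "\<forall>f\<in>E. 0 \<le> y f \<and> y f \<le> z f"
  shows "Fmap E p y e \<le> Fmap E p z e"
proof -
  obtain j i where e: "e = (j, i)" by fastforce
  have "0 \<le> 1 - p (k, j) + p (k, j) * y (k, j) \<and>
      1 - p (k, j) + p (k, j) * y (k, j) \<le> 1 - p (k, j) + p (k, j) * z (k, j)"
    if "(k, j) \<in> E" for k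
    using assms that mult_left_mono[of "y (k, j)" "z (k, j)" "p (k, j)"]
      mult_left_le[of "y (k, j)" "p (k, j)"] by force
  then show ?thesis
    unfolding e Fmap_apply by (intro prod_mono) (auto dest: in_nbrsD)
qed

lemma Fmap_nonneg:
  assumes "\<forall>f\<in>E. 0 \<le> p f \<and> p f \<le> 1" and "\<forall>f\<in>E. 0 \<le> y f"
  shows "0 \<le> Fmap E p y e"
proof -
  obtain j i where e: "e = (j, i)" by fastforce
  have "0 \<le> 1 - p (k, j) + p (k, j) * y (k, j)" if "(k, j) \<in> E" for k
    using assms that by (simp add: add_nonneg_nonneg)
  then show ?thesis
    unfolding e Fmap_apply by (intro prod_nonneg) (auto dest: in_nbrsD)
qed

lemma tendsto_Fmap:
  assumes "\<forall>f\<in>E. (\<lambda>n. x n f) \<longlonglongrightarrow> y f"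
  shows "(\<lambda>n. Fmap E p (x n) e) \<longlonglongrightarrow> Fmap E p y e"
proof -
  obtain j i where e: "e = (j, i)" by fastforce
  show ?thesis
    unfolding e Fmap_apply
    using assms by (intro tendsto_prod tendsto_intros) (auto dest: in_nbrsD)
qed

lemma sum_hashimoto_into_edge:
  fixes g :: "'v \<times> 'v \<Rightarrow> real"
  assumes "finite E"
  shows "(\<Sum>f\<in>E. hashimoto f (j, i) * g f) = (\<Sum>k\<in>in_nbrs E j - {i}. g (k, j))"
proof -
  have "(\<Sum>f\<in>E. hashimoto f (j, i) * g f) = (\<Sum>f\<in>E. if snd f = j \<and> fst f \<noteq> i then g f else 0)"
    by (intro sum.cong) (auto simp: hashimoto_def)
  also have "\<dots> = sum g {f\<in>E. snd f = j \<and> fst f \<noteq> i}"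
    using assms by (simp add: sum.inter_filter)
  also have "{f\<in>E. snd f = j \<and> fst f \<noteq> i} = (\<lambda>k. (k, j)) ` (in_nbrs E j - {i})"
    unfolding in_nbrs_def by force
  also have "sum g \<dots> = (\<Sum>k\<in>in_nbrs E j - {i}. g (k, j))"
    by (subst sum.reindex) (auto simp: inj_on_def)
  finally show ?thesis .
qed

lemma Fmap_one_minus_mult_le_1:
  assumes "finite E" and "\<forall>f\<in>E. 0 \<le> p f \<and> p f \<le> 1" and "\<forall>f\<in>E. 0 \<le> g f \<and> g f \<le> 1"
  shows "Fmap E p (\<lambda>f. 1 - g f) e * (1 + (\<Sum>f\<in>E. hashimoto f e * (p f * g f))) \<le> 1"
proof -
  obtain j i where e: "e = (j, i)" by fastforce
  define K where "K = in_nbrs E j - {i}"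
  have "finite K"
    unfolding K_def using finite_in_nbrs[OF assms(1)] by simp
  moreover have "\<forall>k\<in>K. 0 \<le> p (k, j) * g (k, j) \<and> p (k, j) * g (k, j) \<le> 1"
    using assms(2,3) by (auto simp: K_def mult_le_one dest: in_nbrsD)
  ultimately show ?thesis
    using prod_one_minus_mult_one_plus_sum_le_1[of K "\<lambda>k. p (k, j) * g (k, j)"]
    unfolding e Fmap_apply sum_hashimoto_into_edge[OF assms(1)] K_def
    by (simp add: algebra_simps)
qed

lemma Fmap_iterates_bounds:
  assumes "\<forall>f\<in>E. 0 \<le> p f \<and> p f \<le> 1" and "\<forall>f\<in>E. 0 \<le> u f"
    and "\<forall>f\<in>E. Fmap E p u f \<le> u f"
  shows "\<forall>f\<in>E. 0 \<le> (Fmap E p ^^ n) (\<lambda>_. 0) f \<and>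
    (Fmap E p ^^ n) (\<lambda>_. 0) f \<le> (Fmap E p ^^ Suc n) (\<lambda>_. 0) f \<and>
    (Fmap E p ^^ n) (\<lambda>_. 0) f \<le> u f"
proof (induction n)
  case 0
  show ?case using assms(2) Fmap_nonneg[OF assms(1), of "\<lambda>_. 0"] by simp
next
  case (Suc n)
  define x where "x = (Fmap E p ^^ n) (\<lambda>_. 0)"
  have IH: "\<forall>f\<in>E. 0 \<le> x f \<and> x f \<le> Fmap E p x f \<and> x f \<le> u f"
    using Suc.IH unfolding x_def by simp
  have "0 \<le> Fmap E p x f" for f
    using IH by (intro Fmap_nonneg[OF assms(1)]) auto
  moreover have "Fmap E p x f \<le> Fmap E p (Fmap E p x) f" for f
    using IH by (intro Fmap_mono[OF assms(1)]) auto
  moreover have "Fmap E p x f \<le> u f" if "f \<in> E" for f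
    using Fmap_mono[OF assms(1), of x u f] IH assms(3) that by fastforce
  ultimately show ?case unfolding x_def by simp
qed

lemma Fmap_fixed_point_below_supersolution:
  assumes "\<forall>f\<in>E. 0 \<le> p f \<and> p f \<le> 1" and "\<forall>f\<in>E. 0 \<le> u f"
    and "\<forall>f\<in>E. Fmap E p u f \<le> u f"
  obtains Q where "\<forall>f\<in>E. 0 \<le> Q f \<and> Q f \<le> u f" and "\<forall>f\<in>E. Q f = Fmap E p Q f"
proof -
  define x where "x n = (Fmap E p ^^ n) (\<lambda>_. 0)" for n
  define Q where "Q f = (SUP n. x n f)" for f
  note bounds = Fmap_iterates_bounds[OF assms, folded x_def]
  have conv: "\<forall>f\<in>E. (\<lambda>n. x n f) \<longlonglongrightarrow> Q f"
    unfolding Q_def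
  proof (intro ballI LIMSEQ_incseq_SUP)
    fix f assume "f \<in> E"
    then show "bdd_above (range (\<lambda>n. x n f))" "incseq (\<lambda>n. x n f)"
      using bounds by (auto intro: bdd_aboveI[of _ "u f"] incseq_SucI)
  qed
  have "\<forall>f\<in>E. 0 \<le> Q f \<and> Q f \<le> u f"
    using bounds conv
    by (metis (no_types, lifting) LIMSEQ_le_const LIMSEQ_le_const2)
  moreover have "\<forall>f\<in>E. Q f = Fmap E p Q f"
  proof
    fix f assume "f \<in> E"
    have "(\<lambda>n. Fmap E p (x n) f) \<longlonglongrightarrow> Q f"
      using LIMSEQ_Suc[OF conv[rule_format, OF \<open>f \<in> E\<close>]] by (simp add: x_def)
    then show "Q f = Fmap E p Q f"
      using LIMSEQ_unique tendsto_Fmap[OF conv] by blast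
  qed
  ultimately show ?thesis by (rule that)
qed

lemma nonneg_real_mat_subinvariant_vector:
  fixes A :: "complex mat" and a :: "nat \<Rightarrow> nat \<Rightarrow> real"
  assumes A: "A \<in> carrier_mat n n" and "0 < n" and "1 < spectral_radius A"
    and entries: "\<And>i j. i < n \<Longrightarrow> j < n \<Longrightarrow> A $$ (i, j) = complex_of_real (a i j)"
    and nonneg: "\<And>i j. i < n \<Longrightarrow> j < n \<Longrightarrow> 0 \<le> a i j"
  obtains r w where "1 < r" and "\<forall>i<n. 0 \<le> w i \<and> w i \<le> 1" and "\<exists>i<n. w i \<noteq> 0"
    and "\<forall>i<n. r * w i \<le> (\<Sum>j<n. a i j * w j)"
proof -
  obtain v c where v: "v \<in> carrier_vec n" "v \<noteq> 0\<^sub>v n" and c: "1 < norm c"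
    and eig: "A *\<^sub>v v = c \<cdot>\<^sub>v v"
    using spectral_radius_gt_1[OF assms(1-3), of 1] A by auto
  define w where "w i = norm (v $ i)" for i
  have sub: "norm c * w i \<le> (\<Sum>j<n. a i j * w j)" if "i < n" for i
  proof -
    have "norm c * w i = norm (\<Sum>j<n. A $$ (i, j) * v $ j)"
      using arg_cong[OF eig, of "\<lambda>x. x $ i"] that v(1) A
      by (simp add: w_def norm_mult scalar_prod_def lessThan_atLeast0)
    also have "\<dots> \<le> (\<Sum>j<n. norm (A $$ (i, j) * v $ j))"
      by (rule norm_sum)
    also have "\<dots> = (\<Sum>j<n. a i j * w j)"
      using that by (intro sum.cong) (simp_all add: entries nonneg w_def norm_mult)
    finally show ?thesis .
  qed
  obtain i0 where i0: "i0 < n" "v $ i0 \<noteq> 0"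
    using v by (metis carrier_vecD eq_vecI index_zero_vec)
  define m where "m = Max (w ` {..<n})"
  have w_le_m: "w i \<le> m" if "i < n" for i
    using that by (simp add: m_def)
  have "0 < m"
    using w_le_m[OF i0(1)] i0(2) unfolding w_def by (meson less_le_trans zero_less_norm_iff)
  show ?thesis
  proof (rule that[of "norm c" "\<lambda>i. w i / m"])
    show "\<forall>i<n. 0 \<le> w i / m \<and> w i / m \<le> 1"
      using \<open>0 < m\<close> w_le_m by (simp add: w_def)
    show "\<exists>i<n. w i / m \<noteq> 0"
      using i0 \<open>0 < m\<close> by (auto simp: w_def)
    show "\<forall>i<n. norm c * (w i / m) \<le> (\<Sum>j<n. a i j * (w j / m))"
      using sub \<open>0 < m\<close> by (simp add: sum_divide_distrib[symmetric] divide_right_mono)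
  qed (use c in simp)
qed

lemma BT_diag_mat_subinvariant_vector:
  assumes es: "distinct es" "set es = E" and "E \<noteq> {}" and p: "\<forall>f\<in>E. 0 \<le> p f"
    and "1 < spectral_radius (BT_diag_mat es p)"
  obtains r W where "1 < r" and "\<forall>f\<in>E. 0 \<le> W f \<and> W f \<le> 1" and "\<exists>f\<in>E. W f \<noteq> 0"
    and "\<forall>e\<in>E. r * W e \<le> (\<Sum>f\<in>E. hashimoto f e * (p f * W f))"
proof -
  let ?n = "length es"
  have bij: "bij_betw (nth es) {..<?n} E"
    using bij_betw_nth[OF es(1)] es(2) by simp
  let ?a = "\<lambda>i j. hashimoto (es ! j) (es ! i) * p (es ! j)"
  have carrier: "BT_diag_mat es p \<in> carrier_mat ?n ?n" by (simp add: BT_diag_mat_def)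
  have "0 < ?n" using es(2) \<open>E \<noteq> {}\<close> by auto
  have entries: "BT_diag_mat es p $$ (i, j) = complex_of_real (?a i j)" if "i < ?n" "j < ?n" for i j
    using that by (simp add: BT_diag_mat_def)
  have nonneg: "0 \<le> ?a i j" if "j < ?n" for i j
    using that p es(2) nth_mem by (auto simp: hashimoto_def)
  obtain r w where r: "1 < r" and w: "\<forall>i<?n. 0 \<le> w i \<and> w i \<le> 1" "\<exists>i<?n. w i \<noteq> 0"
    and sub: "\<forall>i<?n. r * w i \<le> (\<Sum>j<?n. ?a i j * w j)"
    by (rule nonneg_real_mat_subinvariant_vector[OF carrier \<open>0 < ?n\<close> assms(5) entries nonneg])
  define W where "W f = w (the_inv_into {..<?n} (nth es) f)" for f
  have W_nth: "W (es ! i) = w i" if "i < ?n" for i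
    using the_inv_into_f_f[OF bij_betw_imp_inj_on[OF bij]] that by (simp add: W_def)
  have sum_edges: "(\<Sum>f\<in>E. g f) = (\<Sum>j<?n. g (es ! j))" for g :: "_ \<Rightarrow> real"
    using sum.reindex_bij_betw[OF bij, of g] by simp
  show ?thesis
  proof (rule that[OF r])
    show "\<forall>f\<in>E. 0 \<le> W f \<and> W f \<le> 1"
      unfolding es(2)[symmetric] all_set_conv_all_nth using w(1) W_nth by simp
    show "\<exists>f\<in>E. W f \<noteq> 0"
      using w(2) W_nth es(2) nth_mem by metis
    show "\<forall>e\<in>E. r * W e \<le> (\<Sum>f\<in>E. hashimoto f e * (p f * W f))"
      unfolding sum_edges unfolding es(2)[symmetric] all_set_conv_all_nth
      using sub W_nth by (simp add: mult.assoc)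
  qed
qed

lemma Fmap_supersolution_from_subinvariant_vector:
  assumes "finite E" and p: "\<forall>f\<in>E. 0 \<le> p f \<and> p f \<le> 1" and W: "\<forall>f\<in>E. 0 \<le> W f \<and> W f \<le> 1"
    and "1 < r" and sub: "\<forall>e\<in>E. r * W e \<le> (\<Sum>f\<in>E. hashimoto f e * (p f * W f))"
  obtains \<epsilon> where "0 < \<epsilon>" and "\<epsilon> \<le> 1"
    and "\<forall>e\<in>E. Fmap E p (\<lambda>f. 1 - \<epsilon> * W f) e \<le> 1 - \<epsilon> * W e"
proof -
  define T where "T = (\<Sum>f\<in>E. p f * W f)"
  have "0 \<le> T" unfolding T_def using p W by (simp add: sum_nonneg)
  define \<epsilon> where "\<epsilon> = min 1 ((r - 1) / (1 + T))"
  have \<epsilon>: "0 < \<epsilon>" "\<epsilon> \<le> 1" using \<open>1 < r\<close> \<open>0 \<le> T\<close> by (auto simp: \<epsilon>_def)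
  have "\<epsilon> * (1 + T) \<le> (r - 1) / (1 + T) * (1 + T)"
    using \<open>0 \<le> T\<close> by (intro mult_right_mono) (auto simp: \<epsilon>_def)
  also have "\<dots> = r - 1" using \<open>0 \<le> T\<close> by simp
  finally have "\<epsilon> * (1 + T) \<le> r - 1" .
  have "Fmap E p (\<lambda>f. 1 - \<epsilon> * W f) e \<le> 1 - \<epsilon> * W e" if "e \<in> E" for e
  proof -
    define s where "s = (\<Sum>f\<in>E. hashimoto f e * (p f * (\<epsilon> * W f)))"
    have s_eq: "s = \<epsilon> * (\<Sum>f\<in>E. hashimoto f e * (p f * W f))"
      by (simp add: s_def sum_distrib_left algebra_simps)
    have F_bound: "Fmap E p (\<lambda>f. 1 - \<epsilon> * W f) e * (1 + s) \<le> 1"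
      unfolding s_def using W \<epsilon>
      by (intro Fmap_one_minus_mult_le_1[OF assms(1) p]) (auto simp: mult_le_one)
    have "0 \<le> s"
      unfolding s_def using p W \<epsilon> by (intro sum_nonneg) (auto simp: hashimoto_def)
    have "(\<Sum>f\<in>E. hashimoto f e * (p f * W f)) \<le> T"
      unfolding T_def using p W by (intro sum_mono) (auto simp: hashimoto_def)
    then have "s \<le> \<epsilon> * (1 + T)"
      unfolding s_eq using \<epsilon> by (intro mult_left_mono) auto
    then have "1 + s \<le> r"
      using \<open>\<epsilon> * (1 + T) \<le> r - 1\<close> by linarith
    moreover have "\<epsilon> * W e * r \<le> s"
      using sub that \<epsilon> s_eq by (simp add: mult_left_mono mult.commute mult.left_commute)
    moreover have "0 \<le> \<epsilon> * W e" using W that \<epsilon> by simp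
    ultimately have "1 \<le> (1 - \<epsilon> * W e) * (1 + s)"
      using mult_left_mono[of "1 + s" r "\<epsilon> * W e"] by (simp add: algebra_simps)
    then have "Fmap E p (\<lambda>f. 1 - \<epsilon> * W f) e * (1 + s) \<le> (1 - \<epsilon> * W e) * (1 + s)"
      using F_bound by linarith
    then show ?thesis
      using \<open>0 \<le> s\<close> by (simp add: mult_le_cancel_right)
  qed
  then show ?thesis using that \<epsilon> by blast
qed

theorem theorem1:
  fixes V :: "'v set" and E :: "('v \<times> 'v) set" and es :: "('v \<times> 'v) list"
    and p :: "'v \<times> 'v \<Rightarrow> real"
  assumes "finite V" and "E \<subseteq> V \<times> V" and "E \<noteq> {}"
    and "distinct es" and "set es = E"
    and "hashimoto_irreducible E"
    and "\<forall>e\<in>E. 0 < p e \<and> p e \<le> 1"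
    and "spectral_radius (BT_diag_mat es p) > 1"
  shows "\<exists>Q :: 'v \<times> 'v \<Rightarrow> real.
           (\<forall>e\<in>E. 0 \<le> Q e \<and> Q e \<le> 1) \<and> (\<exists>e\<in>E. Q e \<noteq> 1) \<and>
           (\<forall>e\<in>E. Q e = Fmap E p Q e)"
proof -
  have "finite E" using \<open>set es = E\<close> finite_set by blast
  have p: "\<forall>e\<in>E. 0 \<le> p e \<and> p e \<le> 1" using assms(7) by auto
  then have "\<forall>e\<in>E. 0 \<le> p e" by blast
  obtain r W where "1 < r" and W: "\<forall>f\<in>E. 0 \<le> W f \<and> W f \<le> 1" and "\<exists>f\<in>E. W f \<noteq> 0"
    and sub: "\<forall>e\<in>E. r * W e \<le> (\<Sum>f\<in>E. hashimoto f e * (p f * W f))"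
    by (rule BT_diag_mat_subinvariant_vector[OF assms(4,5,3) \<open>\<forall>e\<in>E. 0 \<le> p e\<close> assms(8)])
  obtain \<epsilon> where \<epsilon>: "0 < \<epsilon>" "\<epsilon> \<le> 1"
    and super: "\<forall>e\<in>E. Fmap E p (\<lambda>f. 1 - \<epsilon> * W f) e \<le> 1 - \<epsilon> * W e"
    by (rule Fmap_supersolution_from_subinvariant_vector[OF \<open>finite E\<close> p W \<open>1 < r\<close> sub])
  have "\<forall>f\<in>E. 0 \<le> 1 - \<epsilon> * W f" using W \<epsilon> by (simp add: mult_le_one)
  then obtain Q where Q: "\<forall>f\<in>E. 0 \<le> Q f \<and> Q f \<le> 1 - \<epsilon> * W f"
    and Q_fixed: "\<forall>f\<in>E. Q f = Fmap E p Q f"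
    by (rule Fmap_fixed_point_below_supersolution[OF p _ super])
  have "\<forall>f\<in>E. 0 \<le> Q f \<and> Q f \<le> 1"
  proof
    fix f assume "f \<in> E"
    then have "0 \<le> \<epsilon> * W f" using W \<epsilon> by simp
    then show "0 \<le> Q f \<and> Q f \<le> 1" using Q \<open>f \<in> E\<close> by fastforce
  qed
  moreover obtain e where "e \<in> E" "W e \<noteq> 0" using \<open>\<exists>f\<in>E. W f \<noteq> 0\<close> by blast
  then have "0 < \<epsilon> * W e" using W \<epsilon> by (simp add: less_le)
  then have "Q e \<noteq> 1" using Q \<open>e \<in> E\<close> by fastforce
  ultimately show ?thesis using Q_fixed \<open>e \<in> E\<close> by (intro exI[of _ Q] conjI bexI[of _ e])
qed

end
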